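(* Let $n$ be an odd integer, and let $a$ and $b$ be distinct positive integers with $a+b=n$. Let $X$ be the circulant graph $X(\mathbb{Z}_{2n}, \{a,-a,b,-b\})$, whose vertex set is $\mathbb{Z}_{2n}$ and in which $u\sim v$ if and only if $v-u\in\{a,-a,b,-b\} \pmod{2n}$; it is a $4$-regular graph. Then the Grover discrete quantum walk on $X$ admits perfect state transfer from vertex $0$ to vertex $n$ at time $2n$, that is, \[U^{2n}\left(\tfrac{1}{2}\, e_0\otimes \mathbf{1}\right) = \tfrac{1}{2}\, e_n\otimes \mathbf{1}.\]
   Context: Let $X$ be a $d$-regular graph on $n$ vertices. Replace each edge $\{u,v\}$ by the two arcs $(u,v)$ and $(v,u)$. The state space is $\mathbb{C}^{nd}$, the space of complex functions on the arcs, with the standard inner product; it is identified with $\mathbb{C}^n\otimes\mathbb{C}^d$, where the arc $(u,v)$ corresponds to the vertex $u$ (its tail) together with one of the $d$ coin directions at $u$. The transition operator is $U=R(I\otimes G)$, where $R$ is the arc-reversal permutation matrix, $(Rf)(u,v)=f(v,u)$, and $G=\frac{2}{d}J-I$ is the $d\times d$ Grover coin ($J$ the all-ones matrix), so that $\big((I\otimes G)f\big)(u,v)=\frac{2}{d}\sum_{w\sim u} f(u,w)-f(u,v)$. For a vertex $u$, $e_u\otimes\mathbf{1}$ denotes the vector that is $1$ on every arc with tail $u$ and $0$ elsewhere, so $\frac{1}{\sqrt d}e_u\otimes\mathbf{1}$ is the uniform superposition over the outgoing arcs of $u$. The graph $X$ admits perfect state transfer from $u$ to $v$ at time $k$ if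 $U^k\left(\frac{1}{\sqrt d}e_u\otimes\mathbf{1}\right)=\frac{1}{\sqrt d}e_v\otimes\mathbf{1}$. *)

theory Defs
  imports Complex_Main
begin

text \<open>Arcs are ordered pairs (u,v) with u,v in V and E u v; a state is a complex
  function on pairs (meaningful on arcs, zero elsewhere).\<close>

definition is_arc :: "'a set \<Rightarrow> ('a \<Rightarrow> 'a \<Rightarrow> bool) \<Rightarrow> 'a \<times> 'a \<Rightarrow> bool" where
  "is_arc V E p \<longleftrightarrow> fst p \<in> V \<and> snd p \<in> V \<and> E (fst p) (snd p)"

definition neighbours :: "'a set \<Rightarrow> ('a \<Rightarrow> 'a \<Rightarrow> bool) \<Rightarrow> 'a \<Rightarrow> 'a set" where
  "neighbours V E u = {w \<in> V. E u w}"

definition regular_graph :: "'a set \<Rightarrow> ('a \<Rightarrow> 'a \<Rightarrow> bool) \<Rightarrow> nat \<Rightarrow> bool" where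
  "regular_graph V E d \<longleftrightarrow> finite V \<and> (\<forall>u v. E u v \<longrightarrow> E v u) \<and> (\<forall>u. \<not> E u u)
     \<and> (\<forall>u\<in>V. card (neighbours V E u) = d)"

definition grover_coin :: "'a set \<Rightarrow> ('a \<Rightarrow> 'a \<Rightarrow> bool) \<Rightarrow> nat \<Rightarrow> ('a \<times> 'a \<Rightarrow> complex) \<Rightarrow> ('a \<times> 'a \<Rightarrow> complex)" where
  "grover_coin V E d f = (\<lambda>(u,v). if is_arc V E (u,v)
      then (2 / of_nat d) * (\<Sum>w\<in>neighbours V E u. f (u,w)) - f (u,v) else 0)"

definition arc_reversal :: "'a set \<Rightarrow> ('a \<Rightarrow> 'a \<Rightarrow> bool) \<Rightarrow> ('a \<times> 'a \<Rightarrow> complex) \<Rightarrow> ('a \<times> 'a \<Rightarrow> complex)" where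
  "arc_reversal V E f = (\<lambda>(u,v). if is_arc V E (u,v) then f (v,u) else 0)"

definition grover_U :: "'a set \<Rightarrow> ('a \<Rightarrow> 'a \<Rightarrow> bool) \<Rightarrow> nat \<Rightarrow> ('a \<times> 'a \<Rightarrow> complex) \<Rightarrow> ('a \<times> 'a \<Rightarrow> complex)" where
  "grover_U V E d f = arc_reversal V E (grover_coin V E d f)"

text \<open>e_u \<otimes> 1: equal to 1 on every arc with tail u and 0 elsewhere.\<close>
definition vertex_all_ones :: "'a set \<Rightarrow> ('a \<Rightarrow> 'a \<Rightarrow> bool) \<Rightarrow> 'a \<Rightarrow> ('a \<times> 'a \<Rightarrow> complex)" where
  "vertex_all_ones V E u = (\<lambda>p. if is_arc V E p \<and> fst p = u then 1 else 0)"

definition perfect_state_transfer :: "'a set \<Rightarrow> ('a \<Rightarrow> 'a \<Rightarrow> bool) \<Rightarrow> nat \<Rightarrow> 'a \<Rightarrow> 'a \<Rightarrow> nat \<Rightarrow> bool" where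
  "perfect_state_transfer V E d u v k \<longleftrightarrow>
     (grover_U V E d ^^ k) (\<lambda>p. (1 / csqrt (of_nat d)) * vertex_all_ones V E u p)
       = (\<lambda>p. (1 / csqrt (of_nat d)) * vertex_all_ones V E v p)"

text \<open>Circulant graph X(Z_m, S): vertices {0..<m} (representatives of Z_m),
  u ~ v iff v - u is congruent mod m to an element of S.\<close>
definition circ_vertices :: "int \<Rightarrow> int set" where
  "circ_vertices m = {0..<m}"

definition circ_adj :: "int \<Rightarrow> int set \<Rightarrow> int \<Rightarrow> int \<Rightarrow> bool" where
  "circ_adj m S u v \<longleftrightarrow> (\<exists>s\<in>S. (v - u) mod m = s mod m)"

end

theory Submission
  imports Defs
begin

text \<open>The state after k steps is written down explicitly. On the arc from u with step s it has
  amplitude 1/4 times the sum of a travelling wave, equal to 1 when n divides u + k s, and a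
  standing wave living only on the vertices 0 and n, whose sign alternates every other step and
  which sits on the tails at even times and on the heads at odd times. Since b = n - a with n odd,
  the contributions of the steps a and -b (and of -a and b) to the travelling wave coincide while
  those to the standing wave cancel; this makes the one-step identity of the Grover walk a
  finite computation. At time 0 the two waves add up on vertex 0 and cancel on n; at time 2n
  the travelling wave is back at its initial position and the standing wave has changed sign at
  vertex 0 (as n is odd), so everything is now concentrated on n.\<close>

definition alt_sign :: "int \<Rightarrow> complex" where
  "alt_sign x = (if even x then 1 else -1)"

lemma alt_sign_add_even [simp]: "even y \<Longrightarrow> alt_sign (x + y) = alt_sign x"
  by (simp add: alt_sign_def)

lemma alt_sign_add_odd [simp]: "odd y \<Longrightarrow> alt_sign (x + y) = - alt_sign x"
  by (simp add: alt_sign_def)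

lemma abs_diff_lt_imp_mod_neq:
  fixes m s t :: int
  assumes "s \<noteq> t" and "\<bar>s - t\<bar> < m"
  shows "(u + s) mod m \<noteq> (u + t) mod m"
proof
  assume "(u + s) mod m = (u + t) mod m"
  then have "m dvd s - t"
    by (metis add_diff_cancel_left mod_eq_dvd_iff)
  then have "\<bar>m\<bar> \<le> \<bar>s - t\<bar>"
    using assms(1) by (simp add: dvd_imp_le_int)
  then show False
    using assms(2) by linarith
qed

locale circulant_pst =
  fixes n a b :: int
  assumes odd_n: "odd n" and a_pos: "a > 0" and b_pos: "b > 0" and a_neq_b: "a \<noteq> b"
    and a_plus_b: "a + b = n"
begin

abbreviation "S \<equiv> {a, -a, b, -b}"
abbreviation "V \<equiv> circ_vertices (2*n)"
abbreviation "E \<equiv> circ_adj (2*n) S"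

lemma n_pos: "n > 0"
  using a_pos b_pos a_plus_b by simp

lemma abs_step_lt: "s \<in> S \<Longrightarrow> \<bar>s\<bar> < n"
  using a_pos b_pos a_plus_b by auto

lemma card_S: "card S = 4"
  using a_pos b_pos a_neq_b by auto

lemma step_mod_in_V: "(u + s) mod (2*n) \<in> V"
  using n_pos by (simp add: circ_vertices_def)

lemma inj_on_step: "inj_on (\<lambda>s. (u + s) mod (2*n)) S"
proof (rule inj_onI, rule ccontr)
  fix s t assume "s \<in> S" "t \<in> S" "s \<noteq> t" "(u + s) mod (2*n) = (u + t) mod (2*n)"
  moreover have "\<bar>s - t\<bar> < 2*n"
    using abs_step_lt[OF \<open>s \<in> S\<close>] abs_step_lt[OF \<open>t \<in> S\<close>] by linarith
  ultimately show False
    using abs_diff_lt_imp_mod_neq by blast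
qed

lemma vertex_step_iff:
  assumes "u \<in> V"
  shows "w \<in> V \<and> (w - u) mod (2*n) = s mod (2*n) \<longleftrightarrow> w = (u + s) mod (2*n)"
proof
  assume w: "w \<in> V \<and> (w - u) mod (2*n) = s mod (2*n)"
  then have "w = (u + (w - u)) mod (2*n)"
    by (simp add: circ_vertices_def)
  also have "\<dots> = (u + s) mod (2*n)"
    using w by (metis mod_add_right_eq)
  finally show "w = (u + s) mod (2*n)" .
next
  assume "w = (u + s) mod (2*n)"
  then show "w \<in> V \<and> (w - u) mod (2*n) = s mod (2*n)"
    by (simp add: step_mod_in_V mod_diff_left_eq)
qed

lemma neighbours_eq: "u \<in> V \<Longrightarrow> neighbours V E u = (\<lambda>s. (u + s) mod (2*n)) ` S"
  using vertex_step_iff[of u] unfolding neighbours_def circ_adj_def by blast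

lemma is_arc_iff: "is_arc V E (u, v) \<longleftrightarrow> u \<in> V \<and> (\<exists>s\<in>S. v = (u + s) mod (2*n))"
  using neighbours_eq[of u] by (auto simp: is_arc_def neighbours_def)

lemma adj_sym: "E u v \<Longrightarrow> E v u"
proof -
  assume "E u v"
  then obtain s where s: "s \<in> S" and "(v - u) mod (2*n) = s mod (2*n)"
    unfolding circ_adj_def by blast
  then have "(u - v) mod (2*n) = (- s) mod (2*n)"
    by (metis minus_diff_eq mod_minus_eq)
  moreover have "- s \<in> S"
    using s by auto
  ultimately show "E v u"
    unfolding circ_adj_def by blast
qed

lemma not_adj_self: "\<not> E u u"
proof -
  have "(0 + s) mod (2*n) \<noteq> (0 + 0) mod (2*n)" if "s \<in> S" for s
    using abs_step_lt[OF that] that a_pos b_pos by (intro abs_diff_lt_imp_mod_neq) auto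
  then show ?thesis
    unfolding circ_adj_def by auto
qed

lemma card_neighbours: "u \<in> V \<Longrightarrow> card (neighbours V E u) = 4"
  using neighbours_eq card_image[OF inj_on_step] card_S by simp

lemma regular: "regular_graph V E 4"
  using adj_sym not_adj_self card_neighbours
  by (simp add: regular_graph_def circ_vertices_def)

definition travelling :: "nat \<Rightarrow> int \<Rightarrow> int \<Rightarrow> complex" where
  "travelling k u s = of_bool (n dvd u + int k * s)"

definition standing :: "nat \<Rightarrow> int \<Rightarrow> int \<Rightarrow> complex" where
  "standing k u s = (if even k then of_bool (n dvd u) * alt_sign (int (k div 2) + u)
     else of_bool (n dvd u + s) * alt_sign (int (k div 2) + u + s))"

text \<open>The arc from u to (u + s) mod 2n is addressed by its tail u and its step s.\<close>
definition amplitude :: "nat \<Rightarrow> int \<Rightarrow> int \<Rightarrow> complex" where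
  "amplitude k u s = (travelling k u s + standing k u s) / 4"

definition walk_state :: "nat \<Rightarrow> int \<times> int \<Rightarrow> complex" where
  "walk_state k = (\<lambda>(u, v). if is_arc V E (u, v) then amplitude k u (v - u) else 0)"

lemma amplitude_mod_cong:
  assumes "x mod (2*n) = x' mod (2*n)" and "s mod (2*n) = s' mod (2*n)"
  shows "amplitude k x s = amplitude k x' s'"
proof -
  have "2 * n dvd x' - x" and "2 * n dvd s' - s"
    using assms by (simp_all add: mod_eq_dvd_iff[symmetric])
  then obtain p q where "x' - x = 2 * n * p" and "s' - s = 2 * n * q"
    by (elim dvdE)
  then have x': "x' = x + n * (2 * p)" and s': "s' = s + n * (2 * q)"
    by simp_all
  have "x' + int k * s' = (x + int k * s) + (2 * p + 2 * int k * q) * n"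
    and "x' + s' = (x + s) + (2 * p + 2 * q) * n" and "x' = x + (2 * p) * n"
    and "int (k div 2) + x' = (int (k div 2) + x) + 2 * (n * p)"
    and "int (k div 2) + x' + s' = (int (k div 2) + x + s) + 2 * (n * (p + q))"
    by (simp_all add: x' s' algebra_simps)
  then show ?thesis
    unfolding amplitude_def travelling_def standing_def
    by (simp only: dvd_add_times_triv_right_iff alt_sign_add_even even_mult_iff even_numeral simp_thms)
qed

lemma travelling_add_n: "travelling k u (s + n) = travelling k u s"
proof -
  have "u + int k * (s + n) = (u + int k * s) + int k * n"
    by (simp add: algebra_simps)
  then show ?thesis
    by (simp only: travelling_def dvd_add_times_triv_right_iff)
qed

lemma standing_add_n: "standing k u (s + n) = (if even k then standing k u s else - standing k u s)"
proof -
  have "u + (s + n) = (u + s) + 1 * n" and "int (k div 2) + u + (s + n) = (int (k div 2) + u + s) + n"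
    by simp_all
  then show ?thesis
    using odd_n by (simp only: standing_def dvd_add_times_triv_right_iff) simp
qed

lemma travelling_Suc: "travelling (Suc k) (v - s) s = travelling k v s"
  by (simp add: travelling_def algebra_simps)

lemma standing_Suc:
  "standing (Suc k) (v - s) s = (if even k then standing k v (-s) else - standing k v (-s))"
proof (cases "even k")
  case True
  then have "Suc k div 2 = k div 2"
    by presburger
  with True show ?thesis
    by (simp add: standing_def)
next
  case False
  then have "int (Suc k div 2) + (v - s) = (int (k div 2) + v + - s) + 1"
    by presburger
  with False show ?thesis
    by (simp only: standing_def if_False if_True even_Suc alt_sign_add_odd odd_one
        diff_conv_add_uminus) simp
qed

lemma sum_S: "(\<Sum>s\<in>S. f s) = f a + f (-a) + f b + f (-b)"
  using a_pos b_pos a_neq_b by (simp add: algebra_simps)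

lemma b_eq: "b = -a + n" and minus_b_eq: "-b = a + (-n)"
  using a_plus_b by simp_all

lemma sum_travelling: "(\<Sum>s\<in>S. travelling k v s) = 2 * (travelling k v a + travelling k v (-a))"
proof -
  have "travelling k v b = travelling k v (-a)"
    unfolding b_eq by (rule travelling_add_n)
  moreover have "travelling k v (-b) = travelling k v a"
    using travelling_add_n[of k v "a + -n"] unfolding minus_b_eq by simp
  ultimately show ?thesis
    unfolding sum_S by simp
qed

lemma sum_standing: "(\<Sum>s\<in>S. standing k v s) = (if even k then 4 * standing k v t else 0)"
proof (cases "even k")
  case True
  then have const: "standing k v s = standing k v t" for s
    by (simp add: standing_def)
  show ?thesis
    unfolding sum_S const[of a] const[of "-a"] const[of b] const[of "-b"] using True by simp
next
  case False
  then have "standing k v b = - standing k v (-a)" and "standing k v (-b) = - standing k v a"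
    using standing_add_n[of k v "-a"] standing_add_n[of k v "a + -n"]
    unfolding b_eq minus_b_eq by simp_all
  then show ?thesis
    unfolding sum_S using False by simp
qed

lemma travelling_sym:
  assumes "s \<in> S"
  shows "travelling k v s + travelling k v (-s) = travelling k v a + travelling k v (-a)"
  using assms travelling_add_n[of k v "-a"] travelling_add_n[of k v "a + -n"]
  by (auto simp: b_eq minus_b_eq)

text \<open>One step of the Grover walk, read on the arc from v - s to v: the coin at v averages the
  four amplitudes leaving v, and the reflected amplitude is the one on the reverse arc.\<close>
lemma amplitude_Suc:
  assumes "s \<in> S"
  shows "2 / 4 * (\<Sum>s'\<in>S. amplitude k v s') - amplitude k v (-s) = amplitude (Suc k) (v - s) s"
proof -
  have sum_amplitude: "(\<Sum>s'\<in>S. amplitude k v s') = (2 * (travelling k v a + travelling k v (-a))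
      + (if even k then 4 * standing k v (-s) else 0)) / 4"
    unfolding amplitude_def sum_divide_distrib[symmetric] sum.distrib sum_travelling
      sum_standing[of k v "-s"] ..
  show ?thesis
    unfolding sum_amplitude travelling_sym[OF assms, symmetric]
    unfolding amplitude_def travelling_Suc standing_Suc
    by (cases "even k") (simp_all add: field_simps)
qed

lemma walk_state_arc:
  assumes "u \<in> V" and "s \<in> S"
  shows "walk_state k (u, (u + s) mod (2*n)) = amplitude k u s"
proof -
  have "((u + s) mod (2*n) - u) mod (2*n) = s mod (2*n)"
    by (simp add: mod_diff_left_eq)
  then show ?thesis
    using assms by (auto simp: walk_state_def is_arc_iff intro!: amplitude_mod_cong)
qed

lemma sum_neighbours_walk_state:
  "v \<in> V \<Longrightarrow> (\<Sum>w\<in>neighbours V E v. walk_state k (v, w)) = (\<Sum>s\<in>S. amplitude k v s)"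
  by (rule sum.reindex_cong[OF inj_on_step neighbours_eq]) (simp_all add: walk_state_arc)

lemma walk_state_Suc: "grover_U V E 4 (walk_state k) = walk_state (Suc k)"
proof (rule ext, clarify)
  fix u v
  show "grover_U V E 4 (walk_state k) (u, v) = walk_state (Suc k) (u, v)"
  proof (cases "is_arc V E (u, v)")
    case False
    then show ?thesis
      by (simp add: grover_U_def arc_reversal_def walk_state_def)
  next
    case True
    then obtain s where u: "u \<in> V" and s: "s \<in> S" and v_eq: "v = (u + s) mod (2*n)"
      unfolding is_arc_iff by blast
    have v: "v \<in> V"
      using v_eq step_mod_in_V by simp
    have u_mod: "u mod (2*n) = (v - s) mod (2*n)"
      by (simp add: v_eq mod_diff_left_eq)
    then have u_eq: "u = (v + - s) mod (2*n)"
      using u by (simp add: circ_vertices_def)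
    have minus_s: "- s \<in> S"
      using s by auto
    then have "is_arc V E (v, u)"
      using u_eq v is_arc_iff by blast
    then have "grover_U V E 4 (walk_state k) (u, v)
        = 2 / 4 * (\<Sum>w\<in>neighbours V E v. walk_state k (v, w)) - walk_state k (v, u)"
      using True by (simp add: grover_U_def arc_reversal_def grover_coin_def)
    also have "\<dots> = 2 / 4 * (\<Sum>s'\<in>S. amplitude k v s') - amplitude k v (- s)"
      by (simp only: sum_neighbours_walk_state[OF v] u_eq walk_state_arc[OF v minus_s])
    also have "\<dots> = amplitude (Suc k) (v - s) s"
      by (rule amplitude_Suc[OF s])
    also have "\<dots> = amplitude (Suc k) u s"
      using u_mod by (intro amplitude_mod_cong) simp_all
    also have "\<dots> = walk_state (Suc k) (u, v)"
      by (simp only: v_eq walk_state_arc[OF u s])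
    finally show ?thesis .
  qed
qed

lemma dvd_vertex_iff: "u \<in> V \<Longrightarrow> n dvd u \<longleftrightarrow> u = 0 \<or> u = n"
proof
  assume "u \<in> V" and "n dvd u"
  then obtain q where q: "u = n * q"
    by (elim dvdE)
  with \<open>u \<in> V\<close> have "0 \<le> n * q" and "n * q < n * 2"
    by (simp_all add: circ_vertices_def mult.commute)
  then have "0 \<le> q" and "q < 2"
    using n_pos by (simp_all add: zero_le_mult_iff)
  then show "u = 0 \<or> u = n"
    using q by (cases "q = 0") auto
qed auto

lemma walk_state_even:
  assumes "even k" and "n dvd int k"
  shows "walk_state k = (\<lambda>(u, v). if is_arc V E (u, v) \<and> (u = 0 \<or> u = n)
     then (1 + alt_sign (int (k div 2) + u)) / 4 else 0)"
proof (rule ext, clarify)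
  fix u v
  have "n dvd u + int k * (v - u) \<longleftrightarrow> n dvd u"
    using assms(2) by (metis dvd_add_left_iff dvd_mult2 add.commute)
  then show "walk_state k (u, v) = (if is_arc V E (u, v) \<and> (u = 0 \<or> u = n)
     then (1 + alt_sign (int (k div 2) + u)) / 4 else 0)"
    using assms(1) dvd_vertex_iff[of u]
    by (auto simp: walk_state_def amplitude_def travelling_def standing_def is_arc_iff)
qed

lemma walk_state_initial: "walk_state 0 = (\<lambda>p. 1 / csqrt (of_nat 4) * vertex_all_ones V E 0 p)"
  using walk_state_even[of 0] odd_n n_pos
  by (auto simp: vertex_all_ones_def alt_sign_def fun_eq_iff)

lemma walk_state_final:
  "walk_state (nat (2*n)) = (\<lambda>p. 1 / csqrt (of_nat 4) * vertex_all_ones V E n p)"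
proof -
  have "even (nat (2*n))" and "n dvd int (nat (2*n))" and "int (nat (2*n) div 2) = n"
    using n_pos by (simp_all add: even_nat_iff)
  then show ?thesis
    using walk_state_even[of "nat (2*n)"] odd_n n_pos
    by (auto simp: vertex_all_ones_def alt_sign_def fun_eq_iff)
qed

end

theorem mainTheorem1:
  fixes n a b :: int
  assumes "odd n" and "a > 0" and "b > 0" and "a \<noteq> b" and "a + b = n"
  shows "regular_graph (circ_vertices (2*n)) (circ_adj (2*n) {a, -a, b, -b}) 4
       \<and> perfect_state_transfer (circ_vertices (2*n)) (circ_adj (2*n) {a, -a, b, -b}) 4
           0 n (nat (2*n))"
proof -
  interpret circulant_pst n a b
    using assms by unfold_locales
  have "(grover_U V E 4 ^^ k) (walk_state 0) = walk_state k" for k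
    by (induction k) (simp_all add: walk_state_Suc)
  then show ?thesis
    using regular walk_state_initial walk_state_final
    unfolding perfect_state_transfer_def by metis
qed

end
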